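(* Let $p\geq3$ be prime. Then in $\mathbb{L}_p$, \[\left(\sum_{l=0}^{p-1}\frac{(-1)^l}{l!}\zeta_{2(p-1)}^l p^{\frac{l}{p-1}}\right)^p-1=O\left(p^{2+\frac{1}{p-1}}\right).\]
   Context: $\mathbb{L}_p$ is the $p$-adic Mal'cev–Neumann field of formal sums $\sum_{x\in\mathbb{Q}}[\alpha_x]p^x$ ($\alpha_x\in\bar{\mathbb{F}}_p$, $[\cdot]$ Teichmüller lift, well-ordered support), containing $\mathbb{Q}_p$, valuation $v_p$ = minimum of support; $p^x$ is the element with support $\{x\}$ and coefficient $1$. $\zeta_{2(p-1)}$ is (the Teichmüller lift of) a fixed primitive $2(p-1)$-th root of unity in $\bar{\mathbb{F}}_p$; $l!$ is the ordinary factorial. $\alpha=O(p^x)$ means $v_p(\alpha)\geq x$. *)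

theory Defs
  imports "HOL-Library.Extended_Real" "HOL-Computational_Algebra.Primes"
begin

text \<open>The Mal'cev--Neumann field is not available in Isabelle/HOL.  We axiomatise the
structure of it that the statement uses: a field of characteristic 0 with a
valuation v (values in the extended reals, v x = \<infinity> iff x = 0) normalised by
v p = 1, a multiplicative system of rational powers p^x (x :: rat) extending p^1 = p,
and an element zeta which is a primitive 2(p-1)-th root of unity.\<close>

definition is_valuation :: "nat \<Rightarrow> ('a::field_char_0 \<Rightarrow> ereal) \<Rightarrow> bool" where
  "is_valuation p v \<longleftrightarrow>
     (\<forall>x. v x = \<infinity> \<longleftrightarrow> x = 0) \<and>
     (\<forall>x y. v (x * y) = v x + v y) \<and>
     (\<forall>x y. min (v x) (v y) \<le> v (x + y)) \<and>
     v (of_nat p) = 1"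

text \<open>P x plays the role of the element p^x (support {x}, coefficient 1).\<close>
definition is_rat_power_system :: "nat \<Rightarrow> (rat \<Rightarrow> 'a::field_char_0) \<Rightarrow> bool" where
  "is_rat_power_system p P \<longleftrightarrow>
     (\<forall>x y. P (x + y) = P x * P y) \<and> P 1 = of_nat p"

definition primitive_root_of_unity :: "nat \<Rightarrow> 'a::field \<Rightarrow> bool" where
  "primitive_root_of_unity n z \<longleftrightarrow> 0 < n \<and> z ^ n = 1 \<and> (\<forall>k. 0 < k \<and> k < n \<longrightarrow> z ^ k \<noteq> 1)"

definition bigO_p :: "('a \<Rightarrow> ereal) \<Rightarrow> 'a \<Rightarrow> real \<Rightarrow> bool" where
  "bigO_p v a c \<longleftrightarrow> ereal c \<le> v a"

end

theory Submission
  imports Defs "HOL-Computational_Algebra.Polynomial" "HOL-Number_Theory.Residues"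
begin

(* Put x = -\<zeta> p^(1/(p-1)), so that x^(p-1) = -p and v x = 1/(p-1); the sum is E(x), where
   E = sum of X^k/k! for k < p is the truncated exponential series.  Since E' = E - M with
   M = X^(p-1)/(p-1)!, the coefficients c n of E^p satisfy (n+1) c (n+1) = p (c n - h n), where
   h n is the n-th coefficient of M E^(p-1), which vanishes for n < p - 1.  Hence v (c n) \<ge> n
   for n < p and v (c n) \<ge> 1 for p < n < 2p, while Wilson's theorem gives c p \<equiv> 1 mod p.
   As x^p = -p x, the terms c 1 x + c p x^p = p x (1 - c p) combine, and then every term of
   E(x)^p - 1 has valuation at least 2 + 1/(p-1). *)

hide_const (open) UnivPoly.coeff UnivPoly.monom module.smult

locale p_valuation =
  fixes p :: nat and v :: "'a::field_char_0 \<Rightarrow> ereal"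
  assumes is_valuation: "is_valuation p v"
begin

lemma valuation_eq_infinity_iff: "v a = \<infinity> \<longleftrightarrow> a = 0"
  using is_valuation unfolding is_valuation_def by blast

lemma valuation_mult: "v (a * b) = v a + v b"
  using is_valuation unfolding is_valuation_def by blast

lemma valuation_add: "min (v a) (v b) \<le> v (a + b)"
  using is_valuation unfolding is_valuation_def by blast

lemma valuation_of_nat_p [simp]: "v (of_nat p) = 1"
  using is_valuation unfolding is_valuation_def by blast

lemma valuation_zero [simp]: "v 0 = \<infinity>"
  by (simp add: valuation_eq_infinity_iff)

lemma valuation_one [simp]: "v 1 = 0"
proof -
  have "1 = 1 + v 1"
    using valuation_mult[of "of_nat p" 1] by simp
  then show ?thesis
    by (cases "v 1") auto
qed

lemma valuation_inverse:
  assumes "a \<noteq> 0"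
  shows "v (inverse a) = - v a"
proof -
  have "v a + v (inverse a) = 0"
    using assms valuation_mult[of a "inverse a"] by simp
  moreover have "v a \<noteq> \<infinity>" "v (inverse a) \<noteq> \<infinity>"
    using assms by (auto simp: valuation_eq_infinity_iff)
  ultimately show ?thesis
    by (cases "v a"; cases "v (inverse a)") auto
qed

lemma valuation_nonzero_finite:
  assumes "a \<noteq> 0"
  obtains r where "v a = ereal r"
  using valuation_inverse[OF assms] valuation_mult[of a "inverse a"] assms
  by (cases "v a") auto

lemma valuation_uminus [simp]: "v (- a) = v a"
proof -
  obtain r where r: "v (-1) = ereal r"
    using valuation_nonzero_finite[of "-1"] by auto
  have "v (-1) + v (-1) = 0"
    using valuation_mult[of "-1" "-1"] by simp
  then have "v (-1) = 0"
    using r by simp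
  then show ?thesis
    using valuation_mult[of "-1" a] by simp
qed

lemma valuation_power:
  assumes "v a = ereal r"
  shows "v (a ^ n) = ereal (real n * r)"
  by (induction n) (simp_all add: valuation_mult assms algebra_simps)

lemma valuation_mult_ge:
  "ereal r \<le> v a \<Longrightarrow> ereal s \<le> v b \<Longrightarrow> ereal (r + s) \<le> v (a * b)"
  unfolding valuation_mult by (metis add_mono plus_ereal.simps(1))

lemma valuation_add_ge: "c \<le> v a \<Longrightarrow> c \<le> v b \<Longrightarrow> c \<le> v (a + b)"
  using valuation_add[of a b] by (meson min.bounded_iff order_trans)

lemma valuation_diff_ge: "c \<le> v a \<Longrightarrow> c \<le> v b \<Longrightarrow> c \<le> v (a - b)"
  using valuation_add_ge[of c a "- b"] by simp

lemma valuation_sum_ge: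
  "finite A \<Longrightarrow> (\<And>i. i \<in> A \<Longrightarrow> c \<le> v (f i)) \<Longrightarrow> c \<le> v (sum f A)"
  by (induction A rule: finite_induct) (auto intro!: valuation_add_ge)

lemma valuation_of_nat_nonneg: "0 \<le> v (of_nat n)"
proof (induction n)
  case (Suc n)
  then show ?case
    using valuation_add_ge[of 0 1 "of_nat n"] by simp
qed simp

lemma valuation_of_int_nonneg: "0 \<le> v (of_int z)"
proof (cases "0 \<le> z")
  case True
  then show ?thesis
    using valuation_of_nat_nonneg[of "nat z"] by simp
next
  case False
  then have "of_int z = - (of_nat (nat (- z)) :: 'a)"
    by simp
  then show ?thesis
    using valuation_of_nat_nonneg[of "nat (- z)"] by simp
qed

lemma valuation_of_nat_dvd:
  assumes "p dvd m"
  shows "1 \<le> v (of_nat m)"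
proof -
  obtain k where "m = p * k"
    using assms by blast
  then have "v (of_nat m) = 1 + v (of_nat k)"
    by (simp add: valuation_mult)
  then show ?thesis
    using valuation_of_nat_nonneg[of k] by (simp add: add_increasing2)
qed

lemma valuation_of_nat_coprime:
  assumes "coprime m p"
  shows "v (of_nat m) = 0"
proof (rule ccontr)
  assume "v (of_nat m) \<noteq> 0"
  then have m_pos: "0 < v (of_nat m)"
    using valuation_of_nat_nonneg[of m] by simp
  obtain u w where "u * int m + w * int p = 1"
    using assms bezout_int[of "int m" "int p"] by (auto simp: coprime_iff_gcd_eq_1 gcd_int_def)
  then have bezout: "of_int u * of_nat m + of_int w * of_nat p = (1 :: 'a)"
    by (metis of_int_1 of_int_add of_int_mult of_int_of_nat_eq)
  have "0 < v (of_int u * (of_nat m :: 'a))"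
    unfolding valuation_mult using valuation_of_int_nonneg m_pos by (rule add_nonneg_pos)
  moreover have "0 < v (of_int w * (of_nat p :: 'a))"
    unfolding valuation_mult using valuation_of_int_nonneg by (rule add_nonneg_pos) simp
  ultimately have "0 < min (v (of_int u * (of_nat m :: 'a))) (v (of_int w * of_nat p))"
    by simp
  also have "\<dots> \<le> v 1"
    using valuation_add[of "of_int u * of_nat m" "of_int w * of_nat p"] unfolding bezout .
  finally show False
    by simp
qed

definition integral_poly :: "'a poly \<Rightarrow> bool" where
  "integral_poly f \<longleftrightarrow> (\<forall>n. 0 \<le> v (coeff f n))"

lemma integral_poly_mult:
  assumes "integral_poly f" "integral_poly g"
  shows "integral_poly (f * g)"
  unfolding integral_poly_def coeff_mult
proof (intro allI valuation_sum_ge)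
  fix n i
  show "0 \<le> v (coeff f i * coeff g (n - i))"
    using assms valuation_mult_ge[of 0 "coeff f i" 0 "coeff g (n - i)"]
    unfolding integral_poly_def by (simp add: zero_ereal_def)
qed simp

lemma integral_poly_power: "integral_poly f \<Longrightarrow> integral_poly (f ^ n)"
proof (induction n)
  case 0
  then show ?case
    by (simp add: integral_poly_def coeff_1 of_bool_def)
next
  case (Suc n)
  then show ?case
    by (simp add: integral_poly_mult)
qed

lemma integral_poly_monom: "0 \<le> v c \<Longrightarrow> integral_poly (monom c n)"
  unfolding integral_poly_def by simp

lemma valuation_poly_ge:
  assumes "v x = ereal e" and "\<And>n. ereal (C - real n * e) \<le> v (coeff f n)"
  shows "ereal C \<le> v (poly f x)"
  unfolding poly_altdef
proof (rule valuation_sum_ge)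
  fix n
  have "ereal (C - real n * e + real n * e) \<le> v (coeff f n * x ^ n)"
    by (intro valuation_mult_ge assms(2)) (simp add: valuation_power[OF assms(1)])
  then show "ereal C \<le> v (coeff f n * x ^ n)"
    by simp
qed simp

end

definition truncated_exp :: "nat \<Rightarrow> 'a::field_char_0 poly" where
  "truncated_exp n = (\<Sum>k<n. monom (1 / fact k) k)"

lemma coeff_truncated_exp: "coeff (truncated_exp n) k = (if k < n then 1 / fact k else 0)"
  by (simp add: truncated_exp_def coeff_sum)

lemma poly_truncated_exp: "poly (truncated_exp n) x = (\<Sum>k<n. x ^ k / fact k)"
  by (simp add: truncated_exp_def poly_sum poly_monom)

lemma truncated_exp_Suc: "truncated_exp (Suc n) = truncated_exp n + monom (1 / fact n) n"
  by (simp add: truncated_exp_def)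

lemma pderiv_truncated_exp_Suc: "pderiv (truncated_exp (Suc n)) = truncated_exp n"
proof (rule poly_eqI)
  fix k
  have "of_nat (Suc k) * (1 / fact (Suc k)) = (1 / fact k :: 'a)"
    by (simp add: field_simps del: of_nat_Suc)
  then show "coeff (pderiv (truncated_exp (Suc n))) k = coeff (truncated_exp n :: 'a poly) k"
    by (simp add: coeff_pderiv coeff_truncated_exp)
qed

locale prime_valuation = p_valuation +
  assumes prime: "prime p"
begin

lemma p_gt_1: "1 < p"
  using prime by (rule prime_gt_1_nat)

lemma valuation_of_nat_not_dvd_mult:
  assumes "\<not> p dvd n"
  shows "v (of_nat n * a) = v a"
proof -
  have "v (of_nat n) = 0"
    using assms prime by (metis coprime_commute prime_imp_coprime valuation_of_nat_coprime)
  then show ?thesis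
    by (simp only: valuation_mult) simp
qed

lemma valuation_fact:
  assumes "n < p"
  shows "v (fact n) = 0"
  using valuation_of_nat_not_dvd_mult[of "fact n" 1] prime_dvd_fact_iff[OF prime, of n] assms
  by simp

lemma valuation_inverse_fact:
  assumes "n < p"
  shows "v (1 / fact n) = 0"
  using valuation_inverse[of "fact n"] valuation_fact[OF assms] by (simp add: divide_inverse)

lemma valuation_one_plus_inverse_fact_ge: "1 \<le> v (1 + 1 / fact (p - 1))"
proof -
  have "p dvd fact (p - 1) + 1"
    using wilson_theorem[OF prime]
    by (metis cong_iff_dvd_diff diff_minus_eq_add int_dvd_int_iff of_nat_1 of_nat_add of_nat_fact)
  then have "1 \<le> v (of_nat (fact (p - 1) + 1) :: 'a)"
    by (rule valuation_of_nat_dvd)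
  also have "\<dots> = v (of_nat (fact (p - 1) + 1) * (1 / fact (p - 1)) :: 'a)"
    using valuation_inverse_fact[of "p - 1"] p_gt_1
    by (simp only: valuation_mult) simp
  also have "of_nat (fact (p - 1) + 1) * (1 / fact (p - 1)) = (1 + 1 / fact (p - 1) :: 'a)"
    by (simp add: field_simps)
  finally show ?thesis .
qed

lemma integral_poly_truncated_exp: "integral_poly (truncated_exp p)"
  unfolding integral_poly_def coeff_truncated_exp using valuation_inverse_fact by simp

abbreviation c :: "nat \<Rightarrow> 'a" where
  "c n \<equiv> coeff (truncated_exp p ^ p) n"

abbreviation h :: "nat \<Rightarrow> 'a" where
  "h n \<equiv> coeff (monom (1 / fact (p - 1)) (p - 1) * truncated_exp p ^ (p - 1)) n"

lemma c_Suc: "of_nat (Suc n) * c (Suc n) = of_nat p * (c n - h n)"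
proof -
  define M :: "'a poly" where "M = monom (1 / fact (p - 1)) (p - 1)"
  let ?T = "truncated_exp p :: 'a poly"
  have Suc_p: "Suc (p - 1) = p"
    using p_gt_1 by simp
  have "pderiv ?T = ?T - M"
    using pderiv_truncated_exp_Suc[of "p - 1"] truncated_exp_Suc[of "p - 1"]
    unfolding M_def Suc_p by (metis add_diff_cancel_right')
  moreover have "pderiv (?T ^ p) = smult (of_nat p) (?T ^ (p - 1)) * pderiv ?T"
    using pderiv_power_Suc[of ?T "p - 1"] unfolding Suc_p .
  moreover have "?T ^ p = ?T ^ (p - 1) * ?T"
    using power_Suc2[of ?T "p - 1"] unfolding Suc_p .
  ultimately have "pderiv (?T ^ p) = smult (of_nat p) (?T ^ p - M * ?T ^ (p - 1))"
    by (simp add: left_diff_distrib right_diff_distrib mult.commute)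
  then show ?thesis
    unfolding M_def by (metis coeff_pderiv coeff_smult coeff_diff)
qed

lemma h_eq_0: "n < p - 1 \<Longrightarrow> h n = 0"
  by (simp add: coeff_monom_mult)

lemma h_p_minus_1: "h (p - 1) = 1 / fact (p - 1)"
  by (simp add: coeff_monom_mult coeff_0_power coeff_truncated_exp)

lemma valuation_h_nonneg: "0 \<le> v (h n)"
  using integral_poly_mult[OF integral_poly_monom integral_poly_power[OF integral_poly_truncated_exp]]
    valuation_inverse_fact[of "p - 1"] p_gt_1
  unfolding integral_poly_def by simp

lemma valuation_c_nonneg: "0 \<le> v (c n)"
  using integral_poly_power[OF integral_poly_truncated_exp] unfolding integral_poly_def by simp

lemma c_0: "c 0 = 1"
  by (simp add: coeff_0_power coeff_truncated_exp p_gt_1)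

lemma c_1: "c 1 = of_nat p"
  using c_Suc[of 0] h_eq_0[of 0] c_0 p_gt_1 by simp

lemma valuation_c_ge: "n < p \<Longrightarrow> ereal (real n) \<le> v (c n)"
proof (induction n)
  case 0
  then show ?case
    using c_0 by (simp add: zero_ereal_def)
next
  case (Suc n)
  have "\<not> p dvd Suc n"
    using Suc.prems by (simp add: nat_dvd_not_less)
  then have "v (c (Suc n)) = v (of_nat (Suc n) * c (Suc n))"
    by (rule valuation_of_nat_not_dvd_mult[symmetric])
  also have "\<dots> = 1 + v (c n)"
    using c_Suc[of n] h_eq_0[of n] Suc.prems by (simp add: valuation_mult)
  finally have "v (c (Suc n)) = 1 + v (c n)" .
  moreover have "1 + ereal (real n) \<le> 1 + v (c n)"
    using Suc by (intro add_left_mono) simp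
  ultimately show ?case
    by (simp add: one_ereal_def)
qed

lemma c_p: "c p = c (p - 1) - 1 / fact (p - 1)"
proof -
  have "of_nat p * c p = of_nat p * (c (p - 1) - h (p - 1))"
    using c_Suc[of "p - 1"] p_gt_1 by simp
  then show ?thesis
    using h_p_minus_1 p_gt_1 by simp
qed

lemma valuation_one_minus_c_p_ge: "1 \<le> v (1 - c p)"
proof -
  have "1 \<le> v (c (p - 1))"
    using valuation_c_ge[of "p - 1"] p_gt_1
    by (simp add: one_ereal_def order_trans[OF _ valuation_c_ge])
  then have "1 \<le> v ((1 + 1 / fact (p - 1)) - c (p - 1))"
    by (rule valuation_diff_ge[OF valuation_one_plus_inverse_fact_ge])
  moreover have "(1 + 1 / fact (p - 1)) - c (p - 1) = 1 - c p"
    by (simp add: c_p)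
  ultimately show ?thesis
    by metis
qed

lemma valuation_c_ge_1:
  assumes "p < n" "n < 2 * p"
  shows "1 \<le> v (c n)"
proof -
  obtain m where m: "n = Suc m"
    using assms by (cases n) auto
  have "\<not> p dvd n"
  proof
    assume "p dvd n"
    then obtain k where "n = p * k" ..
    with assms have "1 < k" "k < 2"
      by simp_all
    then show False
      by simp
  qed
  then have "v (c n) = v (of_nat n * c n)"
    by (rule valuation_of_nat_not_dvd_mult[symmetric])
  also have "\<dots> = 1 + v (c m - h m)"
    using c_Suc[of m] m by (simp add: valuation_mult)
  finally show ?thesis
    using valuation_diff_ge[OF valuation_c_nonneg valuation_h_nonneg] by (simp add: add_increasing2)
qed

lemma valuation_c_ge_weight:
  assumes "n \<notin> {0, 1, p}"
  shows "ereal (2 + 1 / real (p - 1) - real n * (1 / real (p - 1))) \<le> v (c n)"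
proof -
  define e where "e = 1 / real (p - 1)"
  have "e * (real p - 1) = 1"
    using p_gt_1 by (simp add: e_def of_nat_diff)
  then have pe: "real p * e = 1 + e"
    by (simp add: algebra_simps)
  have e_pos: "0 < e"
    using p_gt_1 by (simp add: e_def)
  have "n \<noteq> p"
    using assms by simp
  then consider "n < p" | "p < n \<and> n < 2 * p" | "2 * p \<le> n"
    by linarith
  then show ?thesis
  proof cases
    case 1
    with assms have "2 \<le> real n"
      by auto
    moreover have "2 * e \<le> real n * e"
      using calculation e_pos by (intro mult_right_mono) auto
    ultimately have "2 + e - real n * e \<le> real n"
      using e_pos by linarith
    then have "ereal (2 + e - real n * e) \<le> ereal (real n)"
      by simp
    then show ?thesis
      unfolding e_def[symmetric] using valuation_c_ge[OF 1] by (rule order_trans)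
  next
    case 2
    then have "real p * e \<le> real n * e"
      using e_pos by (intro mult_right_mono) auto
    then have "2 + e - real n * e \<le> 1"
      using pe by simp
    then have "ereal (2 + e - real n * e) \<le> ereal 1"
      by simp
    moreover have "ereal 1 \<le> v (c n)"
      using valuation_c_ge_1 2 by (simp add: one_ereal_def)
    ultimately show ?thesis
      unfolding e_def[symmetric] by (rule order_trans)
  next
    case 3
    then have "2 * real p * e \<le> real n * e"
      using e_pos by (intro mult_right_mono) auto
    moreover have "2 * real p * e = 2 + 2 * e"
      using pe by (simp add: mult.assoc)
    ultimately have "2 + e - real n * e \<le> 0"
      using e_pos by linarith
    then have "ereal (2 + e - real n * e) \<le> ereal 0"
      by simp
    then show ?thesis
      unfolding e_def[symmetric] using valuation_c_nonneg[unfolded zero_ereal_def] by (rule order_trans)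
  qed
qed

context
  fixes x :: 'a
  assumes x_pow: "x ^ (p - 1) = - of_nat p"
begin

lemma valuation_x: "v x = ereal (1 / real (p - 1))"
proof -
  have "x \<noteq> 0"
    using x_pow p_gt_1 by (auto simp: zero_power)
  then obtain r where r: "v x = ereal r"
    using valuation_nonzero_finite by blast
  have "real (p - 1) * r = 1"
    using valuation_power[OF r, of "p - 1"] x_pow p_gt_1 by (simp add: one_ereal_def)
  then show ?thesis
    using r p_gt_1 by (auto simp: eq_divide_eq mult.commute)
qed

lemma valuation_truncated_exp_power_minus_one_ge:
  "ereal (2 + 1 / real (p - 1)) \<le> v (poly (truncated_exp p) x ^ p - 1)"
proof -
  \<comment> \<open>Q x = E(x)^p - 1 since x^p = -p x: the term c p X^p of E^p is traded for -p c p X.\<close>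
  define Q where "Q = truncated_exp p ^ p - 1 - monom (c p) p - monom (of_nat p * c p) 1"
  have "x ^ p = x * x ^ (p - 1)"
    using p_gt_1 by (simp flip: power_Suc)
  then have poly_Q: "poly Q x = poly (truncated_exp p) x ^ p - 1"
    unfolding Q_def using x_pow by (simp add: poly_monom)
  have coeff_Q: "coeff Q n = (if n = 1 then of_nat p * (1 - c p) else if n \<in> {0, p} then 0 else c n)"
    for n
    unfolding Q_def using c_0 c_1 p_gt_1 by (auto simp: coeff_1 right_diff_distrib)
  have "ereal (2 + 1 / real (p - 1) - real n * (1 / real (p - 1))) \<le> v (coeff Q n)" for n
  proof -
    consider "n = 1" | "n \<in> {0, p}" | "n \<notin> {0, 1, p}"
      by blast
    then show ?thesis
    proof cases
      case 1
      have "2 + 1 / real (p - 1) - real n * (1 / real (p - 1)) = 1 + 1"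
        using 1 by simp
      moreover have "ereal (1 + 1) \<le> v (of_nat p * (1 - c p))"
        using valuation_mult_ge[of 1 "of_nat p" 1 "1 - c p"] valuation_one_minus_c_p_ge
        by (simp add: one_ereal_def)
      ultimately show ?thesis
        using 1 by (simp add: coeff_Q)
    next
      case 2
      then show ?thesis
        using p_gt_1 by (auto simp: coeff_Q)
    next
      case 3
      then show ?thesis
        using valuation_c_ge_weight by (simp add: coeff_Q)
    qed
  qed
  then have "ereal (2 + 1 / real (p - 1)) \<le> v (poly Q x)"
    by (rule valuation_poly_ge[OF valuation_x])
  then show ?thesis
    unfolding poly_Q .
qed

end

end

lemma rat_power_system_of_nat_mult:
  assumes "is_rat_power_system p P" "p \<noteq> 0"
  shows "P (of_nat l * r) = P r ^ l"
proof -
  have P_add: "P (a + b) = P a * P b" for a b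
    using assms(1) unfolding is_rat_power_system_def by blast
  have "P 1 \<noteq> 0"
    using assms unfolding is_rat_power_system_def by simp
  then have "P 0 = 1"
    using P_add[of 1 0] by simp
  then show ?thesis
    by (induction l) (simp_all add: P_add distrib_right)
qed

lemma primitive_root_of_unity_power_half:
  assumes "primitive_root_of_unity (2 * m) z"
  shows "z ^ m = -1"
proof -
  have "0 < m" and z_pow: "z ^ (2 * m) = 1" and "\<forall>k. 0 < k \<and> k < 2 * m \<longrightarrow> z ^ k \<noteq> 1"
    using assms unfolding primitive_root_of_unity_def by auto
  then have "z ^ m \<noteq> 1"
    by simp
  moreover have "(z ^ m) ^ 2 = 1"
    using z_pow by (metis power_mult mult.commute)
  ultimately show ?thesis
    by (simp add: power2_eq_1_iff)
qed

theorem proposition3p16: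
  fixes p :: nat and v :: "'a::field_char_0 \<Rightarrow> ereal" and P :: "rat \<Rightarrow> 'a" and \<zeta> :: 'a
  assumes "prime p" and "p \<ge> 3"
    and "is_valuation p v"
    and "is_rat_power_system p P"
    and "primitive_root_of_unity (2 * (p - 1)) \<zeta>"
  shows "bigO_p v
           ((\<Sum>l = 0..p - 1. ((-1) ^ l / fact l) * \<zeta> ^ l * P (of_nat l / of_nat (p - 1))) ^ p - 1)
           (2 + 1 / real (p - 1))"
proof -
  interpret prime_valuation p v
    using assms by unfold_locales
  define w where "w = P (1 / of_nat (p - 1))"
  have P_frac: "P (of_nat l / of_nat (p - 1)) = w ^ l" for l
    using rat_power_system_of_nat_mult[OF assms(4), of l "1 / of_nat (p - 1)"] assms(2)
    unfolding w_def by simp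
  have "w ^ (p - 1) = of_nat p"
    using P_frac[of "p - 1"] assms(2,4) by (simp add: is_rat_power_system_def)
  moreover have "even (p - 1)"
    using prime_odd_nat[OF assms(1)] assms(2) by simp
  ultimately have x_pow: "(- \<zeta> * w) ^ (p - 1) = - of_nat p"
    using primitive_root_of_unity_power_half[OF assms(5)] by (simp add: power_mult_distrib)
  have sum_eq: "(\<Sum>l = 0..p - 1. ((-1) ^ l / fact l) * \<zeta> ^ l * P (of_nat l / of_nat (p - 1)))
      = poly (truncated_exp p) (- \<zeta> * w)"
    unfolding poly_truncated_exp P_frac using assms(2)
    by (intro sum.cong) (auto simp: power_minus' power_mult_distrib)
  show ?thesis
    unfolding bigO_p_def sum_eq by (rule valuation_truncated_exp_power_minus_one_ge[OF x_pow])
qed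

end
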